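(* Let $(X,\rho)$ be a metric space and let $f,g$ be unbounded moduli. Then for all $A,B\in CL(X)$ and every sequence $(A_k)\subset CL(X)$, if $(A_k)$ is $f$-Wijsman statistically convergent to $A$ and $g$-Wijsman statistically convergent to $B$, then $A=B$.
   Context: A modulus is a function $f\colon[0,\infty)\to[0,\infty)$ such that $f(x)=0$ iff $x=0$, $f$ is subadditive, increasing and continuous. $CL(X)$ denotes the set of all non-empty closed subsets of $(X,\rho)$, and $d(x,B)=\inf_{y\in B}\rho(x,y)$. For an unbounded modulus $f$ and $K\subseteq\mathbb N$, the $f$-density is $d^f(K)=\lim_{n\to\infty}\frac{f(|\{k\le n:k\in K\}|)}{f(n)}$ (when the limit exists). A real sequence $(x_k)$ is $f$-statistically convergent to $l$ if for every $\varepsilon>0$ the set $\{k:|x_k-l|\ge\varepsilon\}$ has $f$-density $0$. $(A_k)\subset CL(X)$ is $f$-Wijsman statistically convergent to $A\in CL(X)$ if for every $x\in X$ the sequence $(d(x,A_k))$ is $f$-statistically convergent to $d(x,A)$. *)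

theory Defs
  imports "HOL-Analysis.Analysis"
begin

definition modulus :: "(real \<Rightarrow> real) \<Rightarrow> bool" where
  "modulus f \<longleftrightarrow>
     (\<forall>x\<ge>0. f x \<ge> 0) \<and>
     (\<forall>x\<ge>0. f x = 0 \<longleftrightarrow> x = 0) \<and>
     (\<forall>x\<ge>0. \<forall>y\<ge>0. f (x + y) \<le> f x + f y) \<and>
     mono_on {0..} f \<and>
     continuous_on {0..} f"

definition unbounded_modulus :: "(real \<Rightarrow> real) \<Rightarrow> bool" where
  "unbounded_modulus f \<longleftrightarrow> modulus f \<and> \<not> bdd_above (f ` {0..})"

text \<open>The f-density of K is 0 (the limit exists and equals 0).
  Sequences are indexed by nat; counting uses indices 1..n as in the paper.\<close>
definition f_density_zero :: "(real \<Rightarrow> real) \<Rightarrow> nat set \<Rightarrow> bool" where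
  "f_density_zero f K \<longleftrightarrow>
     ((\<lambda>n. f (real (card {k \<in> {1..n}. k \<in> K})) / f (real n)) \<longlonglongrightarrow> 0)"

definition f_stat_conv :: "(real \<Rightarrow> real) \<Rightarrow> (nat \<Rightarrow> real) \<Rightarrow> real \<Rightarrow> bool" where
  "f_stat_conv f x l \<longleftrightarrow>
     (\<forall>\<epsilon>>0. f_density_zero f {k. \<bar>x k - l\<bar> \<ge> \<epsilon>})"

definition CL :: "'a::metric_space set set" where
  "CL = {A. A \<noteq> {} \<and> closed A}"

definition f_wijsman_stat_conv ::
    "(real \<Rightarrow> real) \<Rightarrow> (nat \<Rightarrow> 'a::metric_space set) \<Rightarrow> 'a set \<Rightarrow> bool" where
  "f_wijsman_stat_conv f As A \<longleftrightarrow>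
     (\<forall>x. f_stat_conv f (\<lambda>k. infdist x (As k)) (infdist x A))"

end

theory Submission
  imports Defs
begin

text \<open>Both limits must coincide: if \<open>a \<noteq> b\<close>, every index lies in the
  exceptional set of \<open>f\<close> or of \<open>g\<close> for \<open>\<epsilon> = \<bar>a - b\<bar> / 2\<close>. But a set of
  \<open>f\<close>-density zero eventually contains fewer than half of \<open>{1..n}\<close>, because
  \<open>f n \<le> 2 f c\<close> whenever \<open>n \<le> 2c\<close> by monotonicity and subadditivity; two such
  sets cannot cover \<open>{1..n}\<close>. Closed sets are then determined by their distance
  functions.\<close>

lemma modulus_pos:
  assumes "modulus f" and "x > 0"
  shows "f x > 0"
  using assms unfolding modulus_def by (metis less_eq_real_def order_less_imp_le)

lemma modulus_le_twice:
  assumes "modulus f" and "0 \<le> x" and "x \<le> 2 * c"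
  shows "f x \<le> 2 * f c"
proof -
  have "0 \<le> c"
    using assms(2,3) by linarith
  moreover have "\<forall>x\<ge>0. \<forall>y\<ge>0. f (x + y) \<le> f x + f y" and mono: "mono_on {0..} f"
    using assms(1) unfolding modulus_def by auto
  ultimately have sub: "f (c + c) \<le> f c + f c"
    by blast
  have "f x \<le> f (c + c)"
    using assms(2,3) \<open>0 \<le> c\<close> by (intro mono_onD[OF mono]) auto
  with sub show ?thesis
    by simp
qed

lemma f_density_zero_eventually_less_half:
  assumes "modulus f" and "f_density_zero f K"
  shows "\<forall>\<^sub>F n in sequentially. 2 * card {k \<in> {1..n}. k \<in> K} < n"
proof -
  have "\<forall>\<^sub>F n in sequentially. f (real (card {k \<in> {1..n}. k \<in> K})) / f (real n) < 1/2"
    using assms(2) unfolding f_density_zero_def by (intro order_tendstoD) auto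
  moreover have "\<forall>\<^sub>F n in sequentially. n \<ge> 1"
    by (rule eventually_ge_at_top)
  ultimately show ?thesis
  proof eventually_elim
    case (elim n)
    define c where "c = card {k \<in> {1..n}. k \<in> K}"
    have fn: "f (real n) > 0"
      using modulus_pos[OF assms(1)] elim(2) by simp
    have "2 * c < n"
    proof (rule ccontr)
      assume "\<not> 2 * c < n"
      then have "f (real n) \<le> 2 * f (real c)"
        using modulus_le_twice[OF assms(1), of "real n" "real c"] by simp
      with fn elim(1) show False
        by (simp add: c_def field_simps)
    qed
    then show ?case
      by (simp add: c_def)
  qed
qed

lemma f_density_zero_Un_neq_UNIV:
  assumes "modulus f" and "modulus g"
    and "f_density_zero f K" and "f_density_zero g L"
  shows "K \<union> L \<noteq> UNIV"
proof
  assume cover: "K \<union> L = UNIV"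
  have "\<forall>\<^sub>F n in sequentially.
      2 * card {k \<in> {1..n}. k \<in> K} < n \<and> 2 * card {k \<in> {1..n}. k \<in> L} < n"
    using f_density_zero_eventually_less_half[OF assms(1,3)]
      f_density_zero_eventually_less_half[OF assms(2,4)]
    by (rule eventually_conj)
  then obtain n where hK: "2 * card {k \<in> {1..n}. k \<in> K} < n"
    and hL: "2 * card {k \<in> {1..n}. k \<in> L} < n"
    using sequentially_bot eventually_happens by blast
  have "{1..n} = {k \<in> {1..n}. k \<in> K} \<union> {k \<in> {1..n}. k \<in> L}"
    using cover by blast
  then have "n = card ({k \<in> {1..n}. k \<in> K} \<union> {k \<in> {1..n}. k \<in> L})"
    by (metis card_atLeastAtMost diff_Suc_1)
  also have "\<dots> \<le> card {k \<in> {1..n}. k \<in> K} + card {k \<in> {1..n}. k \<in> L}"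
    by (rule card_Un_le)
  finally show False
    using hK hL by linarith
qed

lemma f_stat_conv_unique:
  assumes "modulus f" and "modulus g"
    and "f_stat_conv f u a" and "f_stat_conv g u b"
  shows "a = b"
proof (rule ccontr)
  assume "a \<noteq> b"
  define \<epsilon> where "\<epsilon> = \<bar>a - b\<bar> / 2"
  have "\<epsilon> > 0"
    using \<open>a \<noteq> b\<close> by (simp add: \<epsilon>_def)
  have "f_density_zero f {k. \<bar>u k - a\<bar> \<ge> \<epsilon>}"
    and "f_density_zero g {k. \<bar>u k - b\<bar> \<ge> \<epsilon>}"
    using assms(3,4) \<open>\<epsilon> > 0\<close> unfolding f_stat_conv_def by auto
  then have "{k. \<bar>u k - a\<bar> \<ge> \<epsilon>} \<union> {k. \<bar>u k - b\<bar> \<ge> \<epsilon>} \<noteq> UNIV"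
    by (rule f_density_zero_Un_neq_UNIV[OF assms(1,2)])
  then obtain k where "\<bar>u k - a\<bar> < \<epsilon>" and "\<bar>u k - b\<bar> < \<epsilon>"
    by (metis (mono_tags, lifting) UNIV_eq_I Un_iff mem_Collect_eq not_le)
  then have "\<bar>u k - a\<bar> + \<bar>u k - b\<bar> < \<bar>a - b\<bar>"
    using add_strict_mono unfolding \<epsilon>_def by fastforce
  moreover have "\<bar>a - b\<bar> \<le> \<bar>u k - a\<bar> + \<bar>u k - b\<bar>"
    using abs_triangle_ineq[of "a - u k" "u k - b"] abs_minus_commute[of a "u k"] by simp
  ultimately show False
    by simp
qed

lemma closed_eq_if_infdist_eq:
  assumes "closed A" "A \<noteq> {}" "closed B" "B \<noteq> {}"
    and "\<And>x. infdist x A = infdist x B"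
  shows "A = B"
proof (rule set_eqI)
  show "x \<in> A \<longleftrightarrow> x \<in> B" for x
    using in_closed_iff_infdist_zero[OF assms(1,2)] in_closed_iff_infdist_zero[OF assms(3,4)]
      assms(5) by metis
qed

theorem theorem2p3:
  fixes f g :: "real \<Rightarrow> real"
    and As :: "nat \<Rightarrow> 'a::metric_space set"
    and A B :: "'a set"
  assumes "unbounded_modulus f" and "unbounded_modulus g"
    and "A \<in> CL" and "B \<in> CL" and "\<forall>k. As k \<in> CL"
    and "f_wijsman_stat_conv f As A"
    and "f_wijsman_stat_conv g As B"
  shows "A = B"
proof (rule closed_eq_if_infdist_eq)
  show "closed A" "A \<noteq> {}" "closed B" "B \<noteq> {}"
    using assms(3,4) unfolding CL_def by auto
  have "modulus f" "modulus g"
    using assms(1,2) unfolding unbounded_modulus_def by auto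
  then show "infdist x A = infdist x B" for x
    using f_stat_conv_unique assms(6,7) unfolding f_wijsman_stat_conv_def by metis
qed

end
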